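(* Let $\mathbb{F}$ be a field and $\mathcal{C}_2 \subsetneqq \mathcal{C}_1 \subseteq \mathbb{F}^{m \times n}$ linear codes. Then $K_{M,0}(\mathcal{C}_1,\mathcal{C}_2) = 0$, $K_{M,n}(\mathcal{C}_1,\mathcal{C}_2) = \dim(\mathcal{C}_1) - \dim(\mathcal{C}_2)$, and for every $0 \leq \mu \leq n-1$, $$0 \leq K_{M,\mu+1}(\mathcal{C}_1,\mathcal{C}_2) - K_{M,\mu}(\mathcal{C}_1,\mathcal{C}_2) \leq m.$$
   Context: ${\rm Row}(V)$ is the row space. For a subspace $\mathcal{L} \subseteq \mathbb{F}^n$, $\mathcal{V}_\mathcal{L} = \{V \in \mathbb{F}^{m\times n} \mid {\rm Row}(V) \subseteq \mathcal{L}\}$. For $0 \le \mu \le n$, $K_{M,\mu}(\mathcal{C}_1,\mathcal{C}_2) = \max\{\dim(\mathcal{C}_1 \cap \mathcal{V}_\mathcal{L}) - \dim(\mathcal{C}_2 \cap \mathcal{V}_\mathcal{L}) \mid \mathcal{L} \subseteq \mathbb{F}^n \text{ subspace}, \dim \mathcal{L} \le \mu\}$. *)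

theory Defs
  imports "HOL-Analysis.Analysis"
begin

text \<open>Matrices in F^(m x n) are modelled as 'a^'n^'m (rows indexed by 'm, columns by 'n),
  with m = CARD('m), n = CARD('n). Scalar multiplication of matrices is entrywise.\<close>

definition mscale :: "'a::field \<Rightarrow> 'a^'n^'m \<Rightarrow> 'a^'n^'m" where
  "mscale c A = (\<chi> i j. c * A $ i $ j)"

interpretation mat: vector_space "mscale :: 'a::field \<Rightarrow> 'a^'n^'m \<Rightarrow> 'a^'n^'m"
  by unfold_locales (auto simp: mscale_def vec_eq_iff algebra_simps)

definition RowSp :: "'a::field^'n^'m \<Rightarrow> ('a^'n) set" where
  "RowSp V = vec.span (range (\<lambda>i. V $ i))"

definition VL :: "('a::field^'n) set \<Rightarrow> ('a^'n^'m) set" where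
  "VL L = {V. RowSp V \<subseteq> L}"

definition KM :: "nat \<Rightarrow> ('a::field^'n^'m) set \<Rightarrow> ('a^'n^'m) set \<Rightarrow> int" where
  "KM mu C1 C2 = Max {int (mat.dim (C1 \<inter> VL L)) - int (mat.dim (C2 \<inter> VL L)) | L.
        vec.subspace L \<and> vec.dim L \<le> mu}"

end

theory Submission
  imports Defs
begin

text \<open>
  For \<open>\<mu> = 0\<close> only \<open>L = 0\<close> competes in the maximum. For \<open>\<mu> = n\<close> the choice \<open>L = F^n\<close> is
  optimal, because the modular law for dimensions gives
  \<open>dim (C1 \<inter> V_L) - dim (C2 \<inter> V_L) \<le> dim C1 - dim C2\<close> whenever \<open>C2 \<subseteq> C1\<close>. For the increment bound, a maximiser \<open>L\<close> of dimension
  \<open>\<mu> + 1\<close> is \<open>L' + Fv\<close> with \<open>dim L' = \<mu>\<close>, so \<open>V_L \<subseteq> V_L' + S\<close> where \<open>S\<close> is spanned by the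
  \<open>m\<close> matrices having \<open>v\<close> as one row and zeros elsewhere. Hence passing from \<open>L\<close> to \<open>L'\<close>
  costs at most \<open>m\<close> dimensions of \<open>C1 \<inter> V_L\<close>, while \<open>C2 \<inter> V_L\<close> can only shrink.
\<close>

context finite_dimensional_vector_space
begin

lemma dim_Int_add_le:
  assumes "subspace A" "subspace B" "subspace W" "B \<subseteq> A"
  shows "dim (A \<inter> W) + dim B \<le> dim A + dim (B \<inter> W)"
proof -
  have "dim {x + y |x y. x \<in> A \<inter> W \<and> y \<in> B} + dim (A \<inter> W \<inter> B) = dim (A \<inter> W) + dim B"
    using assms by (intro dim_sums_Int subspace_inter)
  moreover have "dim (A \<inter> W \<inter> B) = dim (B \<inter> W)"
    using \<open>B \<subseteq> A\<close> by (intro arg_cong[where f = dim]) blast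
  moreover have "dim {x + y |x y. x \<in> A \<inter> W \<and> y \<in> B} \<le> dim A"
    using assms subspace_add[of A] by (intro dim_subset) blast
  ultimately show ?thesis by linarith
qed

lemma dim_le_dim_Int_add_dim:
  assumes "subspace X" "subspace Y" "subspace S"
    and "X \<subseteq> {y + s |y s. y \<in> Y \<and> s \<in> S}"
  shows "dim X \<le> dim (X \<inter> Y) + dim S"
proof -
  have "{x + y |x y. x \<in> X \<and> y \<in> Y} \<subseteq> {y + s |y s. y \<in> Y \<and> s \<in> S}"
  proof clarify
    fix x y assume "x \<in> X" "y \<in> Y"
    then obtain y' s where "x = y' + s" "y' \<in> Y" "s \<in> S"
      using assms(4) by blast
    then show "\<exists>y'' s'. x + y = y'' + s' \<and> y'' \<in> Y \<and> s' \<in> S"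
      using \<open>y \<in> Y\<close> subspace_add[OF assms(2)] by (metis add.commute add.left_commute)
  qed
  then have "dim {x + y |x y. x \<in> X \<and> y \<in> Y} \<le> dim {y + s |y s. y \<in> Y \<and> s \<in> S}"
    by (rule dim_subset)
  moreover have "dim {x + y |x y. x \<in> X \<and> y \<in> Y} + dim (X \<inter> Y) = dim X + dim Y"
    using assms by (intro dim_sums_Int)
  moreover have "dim {y + s |y s. y \<in> Y \<and> s \<in> S} + dim (Y \<inter> S) = dim Y + dim S"
    using assms by (intro dim_sums_Int)
  ultimately show ?thesis by linarith
qed

end

lemma (in vector_space) subspace_dim_Suc_obtains_hyperplane:
  assumes "subspace L" "dim L = Suc k"
  obtains v L' where "subspace L'" "dim L' = k" "L' \<subseteq> L" "L \<subseteq> span (insert v L')"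
proof -
  obtain B where B: "B \<subseteq> L" "independent B" "L \<subseteq> span B" "card B = Suc k"
    using basis_exists assms(2) by metis
  then obtain v where "v \<in> B"
    by fastforce
  have "finite B"
    using B(4) card.infinite by fastforce
  let ?L' = "span (B - {v})"
  have "independent (B - {v})"
    using B(2) independent_mono by blast
  then have "dim ?L' = card (B - {v})"
    by (rule dim_span_eq_card_independent)
  moreover have "card (B - {v}) = k"
    using B(4) \<open>v \<in> B\<close> \<open>finite B\<close> by simp
  ultimately have "dim ?L' = k"
    by (simp only:)
  moreover have "?L' \<subseteq> L"
    using B(1) assms(1) by (intro span_minimal) auto
  moreover have "L \<subseteq> span (insert v ?L')"
    using B(3) span_mono[of B "insert v ?L'"] by (blast intro: span_base)
  ultimately show thesis
    using that subspace_span by blast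
qed

definition mat_unit :: "'m \<Rightarrow> 'n \<Rightarrow> 'a::field^'n^'m" where
  "mat_unit i j = (\<chi> a b. if a = i \<and> b = j then 1 else 0)"

definition mat_units :: "('a::field^'n^'m) set" where
  "mat_units = range (\<lambda>(i, j). mat_unit i j)"

lemma mat_unit_nth: "mat_unit i j $ a $ b = (if a = i \<and> b = j then 1 else 0)"
  by (simp add: mat_unit_def)

lemma mat_unit_eq_iff: "mat_unit i j = mat_unit a b \<longleftrightarrow> i = a \<and> j = b"
  by (metis mat_unit_nth one_neq_zero)

lemma mscale_row [simp]: "mscale c A $ i = c *s A $ i"
  by (simp add: mscale_def vec_eq_iff)

lemma finite_mat_units: "finite mat_units"
  by (simp add: mat_units_def)

lemma independent_mat_units: "mat.independent (mat_units :: ('a::field^'n^'m) set)"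
proof (rule mat.independent_if_scalars_zero[OF finite_mat_units])
  fix g :: "'a^'n^'m \<Rightarrow> 'a" and x :: "'a^'n^'m"
  assume sum: "(\<Sum>y\<in>mat_units. mscale (g y) y) = 0" and "x \<in> mat_units"
  then obtain i j where x: "x = mat_unit i j"
    by (auto simp: mat_units_def)
  have "0 = (\<Sum>y\<in>mat_units. g y * y $ i $ j)"
    using arg_cong[OF sum, of "\<lambda>A. A $ i $ j"] by simp
  also have "\<dots> = (\<Sum>y\<in>mat_units. if y = x then g y else 0)"
    by (rule sum.cong) (auto simp: mat_units_def x mat_unit_nth mat_unit_eq_iff)
  also have "\<dots> = g x"
    using \<open>x \<in> mat_units\<close> by (simp add: sum.delta finite_mat_units)
  finally show "g x = 0" by simp
qed

lemma span_mat_units: "mat.span (mat_units :: ('a::field^'n^'m) set) = UNIV"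
proof -
  have "V \<in> mat.span mat_units" for V :: "'a^'n^'m"
  proof -
    have "V = (\<Sum>(i, j)\<in>UNIV. mscale (V $ i $ j) (mat_unit i j))"
    proof (simp only: vec_eq_iff, intro allI)
      fix a b
      have "(\<Sum>(i, j)\<in>UNIV. mscale (V $ i $ j) (mat_unit i j :: 'a^'n^'m)) $ a $ b
            = (\<Sum>p\<in>UNIV. if p = (a, b) then V $ a $ b else 0)"
        unfolding case_prod_beta sum_component
        by (rule sum.cong) (auto simp: mat_unit_nth)
      then show "V $ a $ b = (\<Sum>(i, j)\<in>UNIV. mscale (V $ i $ j) (mat_unit i j :: 'a^'n^'m)) $ a $ b"
        by simp
    qed
    also have "\<dots> \<in> mat.span mat_units"
      unfolding case_prod_beta
      by (intro mat.span_sum mat.span_scale mat.span_base) (auto simp: mat_units_def)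
    finally show ?thesis .
  qed
  then show ?thesis by auto
qed

interpretation mat: finite_dimensional_vector_space
  "mscale :: 'a::field \<Rightarrow> 'a^'n^'m \<Rightarrow> 'a^'n^'m" mat_units
  by unfold_locales (rule finite_mat_units independent_mat_units span_mat_units)+

lemma row_in_VL: "V \<in> VL L \<Longrightarrow> V $ i \<in> L"
  unfolding VL_def RowSp_def using vec.span_base by blast

lemma mem_VL_iff: "vec.subspace L \<Longrightarrow> V \<in> VL L \<longleftrightarrow> (\<forall>i. V $ i \<in> L)"
  using row_in_VL vec.span_minimal[of "range (\<lambda>i. V $ i)" L] by (auto simp: VL_def RowSp_def)

lemma subspace_VL: "vec.subspace L \<Longrightarrow> mat.subspace (VL L)"
  unfolding mat.subspace_def
  by (auto simp: mem_VL_iff vec.subspace_0 vec.subspace_add vec.subspace_scale)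

lemma VL_UNIV [simp]: "VL UNIV = UNIV"
  by (simp add: VL_def)

lemma VL_mono: "L' \<subseteq> L \<Longrightarrow> VL L' \<subseteq> VL L"
  by (auto simp: VL_def)

lemma VL_subset_zero: "L \<subseteq> {0} \<Longrightarrow> VL L \<subseteq> {0}"
  using row_in_VL by (fastforce simp: vec_eq_iff)

definition row_matrix :: "'a::field^'n \<Rightarrow> 'm \<Rightarrow> 'a^'n^'m" where
  "row_matrix v i = (\<chi> k. if k = i then v else 0)"

lemma dim_span_row_matrices: "mat.dim (mat.span (range (row_matrix v :: 'm \<Rightarrow> 'a::field^'n^'m))) \<le> CARD('m)"
proof -
  have "mat.dim (mat.span (range (row_matrix v :: 'm \<Rightarrow> 'a^'n^'m))) \<le> card (range (row_matrix v :: 'm \<Rightarrow> 'a^'n^'m))"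
    by (simp add: mat.dim_le_card mat.span_superset)
  also have "\<dots> \<le> CARD('m)"
    by (rule card_image_le) simp
  finally show ?thesis .
qed

lemma VL_subset_sums_row_matrices:
  assumes "vec.subspace L'" "L \<subseteq> vec.span (insert v L')"
  shows "VL L \<subseteq> {x + u |x u. x \<in> VL L' \<and> u \<in> mat.span (range (row_matrix v :: 'm \<Rightarrow> 'a::field^'n^'m))}"
proof
  fix V :: "'a^'n^'m"
  assume "V \<in> VL L"
  then have "\<exists>c. V $ i - c *s v \<in> L'" for i
    using assms(2) row_in_VL[of V L i] vec.span_insert[of v L'] vec.span_eq_iff[THEN iffD2, OF assms(1)]
    by auto
  then obtain c where c: "\<And>i. V $ i - c i *s v \<in> L'"
    by metis
  define u where "u = (\<Sum>i\<in>UNIV. mscale (c i) (row_matrix v i))"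
  have "u $ i = c i *s v" for i
    by (simp add: u_def vec_eq_iff sum_component row_matrix_def if_distrib cong: if_cong)
  then have "V - u \<in> VL L'"
    using c assms(1) by (simp add: mem_VL_iff)
  moreover have "u \<in> mat.span (range (row_matrix v))"
    unfolding u_def by (intro mat.span_sum mat.span_scale mat.span_base) auto
  ultimately show "V \<in> {x + u |x u. x \<in> VL L' \<and> u \<in> mat.span (range (row_matrix v))}"
    by force
qed

definition VL_dim_gap :: "('a::field^'n^'m) set \<Rightarrow> ('a^'n^'m) set \<Rightarrow> ('a^'n) set \<Rightarrow> int" where
  "VL_dim_gap C1 C2 L = int (mat.dim (C1 \<inter> VL L)) - int (mat.dim (C2 \<inter> VL L))"

lemma KM_eq_Max: "KM mu C1 C2 = Max (VL_dim_gap C1 C2 ` {L. vec.subspace L \<and> vec.dim L \<le> mu})"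
  unfolding KM_def VL_dim_gap_def by (rule arg_cong[where f = Max]) blast

lemma finite_VL_dim_gaps:
  fixes C1 C2 :: "('a::field^'n^'m) set"
  shows "finite (VL_dim_gap C1 C2 ` S)"
proof (rule finite_subset)
  let ?D = "int (mat.dim (UNIV :: ('a^'n^'m) set))"
  have dim_le: "mat.dim (C \<inter> VL L) \<le> mat.dim (UNIV :: ('a^'n^'m) set)" for C :: "('a^'n^'m) set" and L
    by (rule mat.dim_subset) simp
  show "VL_dim_gap C1 C2 ` S \<subseteq> {-?D..?D}"
  proof
    fix x assume "x \<in> VL_dim_gap C1 C2 ` S"
    then obtain L where "x = VL_dim_gap C1 C2 L"
      by blast
    then show "x \<in> {-?D..?D}"
      using dim_le[of C1 L] dim_le[of C2 L] by (simp add: VL_dim_gap_def)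
  qed
qed simp

lemma VL_dim_gap_le_KM:
  "vec.subspace L \<Longrightarrow> vec.dim L \<le> mu \<Longrightarrow> VL_dim_gap C1 C2 L \<le> KM mu C1 C2"
  unfolding KM_eq_Max by (blast intro: Max_ge finite_VL_dim_gaps)

lemma KM_attained:
  obtains L where "vec.subspace L" "vec.dim L \<le> mu" "KM mu C1 C2 = VL_dim_gap C1 C2 L"
proof -
  have "{0} \<in> {L. vec.subspace L \<and> vec.dim L \<le> mu}"
    by simp
  then have "KM mu C1 C2 \<in> VL_dim_gap C1 C2 ` {L. vec.subspace L \<and> vec.dim L \<le> mu}"
    unfolding KM_eq_Max by (blast intro: Max_in finite_VL_dim_gaps)
  then show thesis
    using that by blast
qed

lemma VL_dim_gap_le_dim_diff:
  assumes "mat.subspace C1" "mat.subspace C2" "C2 \<subseteq> C1" "vec.subspace L"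
  shows "VL_dim_gap C1 C2 L \<le> int (mat.dim C1) - int (mat.dim C2)"
  using mat.dim_Int_add_le[OF assms(1,2) subspace_VL[OF assms(4)] assms(3)]
  by (simp add: VL_dim_gap_def)

lemma VL_dim_gap_le_hyperplane:
  fixes C1 C2 :: "('a::field^'n^'m) set"
  assumes "mat.subspace C1" "vec.subspace L" "vec.subspace L'" "L' \<subseteq> L"
    and "L \<subseteq> vec.span (insert v L')"
  shows "VL_dim_gap C1 C2 L \<le> VL_dim_gap C1 C2 L' + CARD('m)"
proof -
  let ?S = "mat.span (range (row_matrix v)) :: ('a^'n^'m) set"
  have "mat.dim (C1 \<inter> VL L) \<le> mat.dim (C1 \<inter> VL L \<inter> VL L') + mat.dim ?S"
    using VL_subset_sums_row_matrices[OF assms(3,5)]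
    by (intro mat.dim_le_dim_Int_add_dim mat.subspace_inter assms subspace_VL) auto
  moreover have "C1 \<inter> VL L \<inter> VL L' = C1 \<inter> VL L'"
    using VL_mono[OF assms(4)] by blast
  moreover have "mat.dim (C2 \<inter> VL L') \<le> mat.dim (C2 \<inter> VL L)"
    using VL_mono[OF assms(4)] by (intro mat.dim_subset) blast
  ultimately show ?thesis
    using dim_span_row_matrices[of v, where 'm = 'm] by (simp add: VL_dim_gap_def)
qed

lemma KM_zero: "KM 0 C1 C2 = 0"
proof -
  obtain L where "vec.subspace L" "vec.dim L \<le> 0" "KM 0 C1 C2 = VL_dim_gap C1 C2 L"
    by (rule KM_attained)
  moreover from this have "VL L \<subseteq> {0}"
    by (intro VL_subset_zero) simp
  then have "mat.dim (C1 \<inter> VL L) = 0" "mat.dim (C2 \<inter> VL L) = 0"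
    by auto
  ultimately show ?thesis
    by (simp add: VL_dim_gap_def)
qed

lemma KM_mono:
  assumes "mu \<le> mu'"
  shows "KM mu C1 C2 \<le> KM mu' C1 C2"
proof -
  obtain L where "vec.subspace L" "vec.dim L \<le> mu" "KM mu C1 C2 = VL_dim_gap C1 C2 L"
    by (rule KM_attained)
  then show ?thesis
    using assms VL_dim_gap_le_KM[of L mu' C1 C2] by simp
qed

lemma KM_eq_dim_diff:
  fixes C1 C2 :: "('a::field^'n^'m) set"
  assumes "mat.subspace C1" "mat.subspace C2" "C2 \<subseteq> C1" "CARD('n) \<le> mu"
  shows "KM mu C1 C2 = int (mat.dim C1) - int (mat.dim C2)"
proof (rule antisym)
  show "KM mu C1 C2 \<le> int (mat.dim C1) - int (mat.dim C2)"
    using assms KM_attained VL_dim_gap_le_dim_diff by metis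
  have "vec.dim (UNIV :: ('a^'n) set) \<le> mu"
    using dim_subset_UNIV_cart_gen assms(4) le_trans by blast
  then show "int (mat.dim C1) - int (mat.dim C2) \<le> KM mu C1 C2"
    using VL_dim_gap_le_KM[of UNIV mu C1 C2] by (simp add: VL_dim_gap_def)
qed

lemma KM_Suc_le:
  fixes C1 C2 :: "('a::field^'n^'m) set"
  assumes "mat.subspace C1"
  shows "KM (Suc mu) C1 C2 \<le> KM mu C1 C2 + CARD('m)"
proof -
  obtain L where L: "vec.subspace L" "vec.dim L \<le> Suc mu" "KM (Suc mu) C1 C2 = VL_dim_gap C1 C2 L"
    by (rule KM_attained)
  show ?thesis
  proof (cases "vec.dim L = Suc mu")
    case True
    then obtain v L' where L': "vec.subspace L'" "vec.dim L' = mu" "L' \<subseteq> L"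
        "L \<subseteq> vec.span (insert v L')"
      by (rule vec.subspace_dim_Suc_obtains_hyperplane[OF L(1)])
    have "VL_dim_gap C1 C2 L \<le> VL_dim_gap C1 C2 L' + CARD('m)"
      by (rule VL_dim_gap_le_hyperplane[OF assms L(1) L'(1,3,4)])
    also have "\<dots> \<le> KM mu C1 C2 + CARD('m)"
      using VL_dim_gap_le_KM[of L' mu C1 C2] L'(1,2) by simp
    finally show ?thesis
      using L(3) by simp
  next
    case False
    then show ?thesis
      using L VL_dim_gap_le_KM[of L mu C1 C2] by simp
  qed
qed

theorem proposition13:
  fixes C1 C2 :: "('a::field^'n^'m) set"
  assumes "mat.subspace C1" and "mat.subspace C2" and "C2 \<subset> C1"
  shows "KM 0 C1 C2 = 0 \<and>
         KM CARD('n) C1 C2 = int (mat.dim C1) - int (mat.dim C2) \<and>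
         (\<forall>mu. mu \<le> CARD('n) - 1 \<longrightarrow>
           0 \<le> KM (mu + 1) C1 C2 - KM mu C1 C2 \<and>
           KM (mu + 1) C1 C2 - KM mu C1 C2 \<le> int CARD('m))"
proof (intro conjI allI impI)
  show "KM CARD('n) C1 C2 = int (mat.dim C1) - int (mat.dim C2)"
    using assms by (intro KM_eq_dim_diff) auto
  fix mu :: nat
  show "0 \<le> KM (mu + 1) C1 C2 - KM mu C1 C2"
    using KM_mono[of mu "mu + 1" C1 C2] by simp
  show "KM (mu + 1) C1 C2 - KM mu C1 C2 \<le> int CARD('m)"
    using KM_Suc_le[OF assms(1), of mu C2] by simp
qed (rule KM_zero)

end
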